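(* Let $T\in\mathcal{M}_k(F)$ be a decision table and $\psi$ a complexity measure over $\mathcal{M}_k(F)$. Then $\psi^a(T)\le\psi^d(T)\le\psi^i(T)$.
   Context: Let $\mathbb{N}=\{0,1,2,\dots\}$; for an integer $k\ge 2$ let $E_k=\{0,1,\dots,k-1\}$; let $\mathcal{P}(\mathbb{N})$ be the set of nonempty finite subsets of $\mathbb{N}$. Let $F$ be a nonempty set (of attribute names). A decision table $T\in\mathcal{M}_k(F)$ is a rectangular table with $n\ge 1$ columns labeled with attributes $f_1,\dots,f_n\in F$ (any two columns labeled with the same attribute are equal), whose rows are pairwise different tuples from $E_k^n$ (the set of rows may be empty), each row being labeled with a set of decisions from $\mathcal{P}(\mathbb{N})$. Write $At(T)=\{f_1,\dots,f_n\}$ and $\Delta(T)$ for the set of rows. For a word $\alpha=(f_{i_1},\delta_1)\cdots(f_{i_m},\delta_m)$ with $f_{i_j}\in At(T)$, $\delta_j\in E_k$, the subtable $T\alpha$ consists of the rows of $T$ having value $\delta_j$ in column $f_{i_j}$ for all $j$ ($T\lambda=T$ for the empty word $\lambda$). A decision tree over $\mathcal{M}_k(F)$ is a finite directed tree with a root (unique node with no entering edge) and at least two nodes such that the root and the edges leaving the root are unlabeled, each worker node (neither root nor terminal) is labeled with an attribute from $F$, each edge leaving a worker node is labeled with a number from $E_k$, and each terminal node is labeled with a number from $\mathbb{N}$. For a complete path $\xi$ (root to terminal node) whose worker nodes are labeled $f_{j_1},\dots,f_{j_m}$ in order, with the edges leaving them labeled $\delta_1,\dots,\delta_m$, put $\pi(\xi)=(f_{j_1},\delta_1)\cdots(f_{j_m},\delta_m)$,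 $\varphi(\xi)=f_{j_1}\cdots f_{j_m}$ (both empty if $m=0$), and let $\tau(\xi)$ be the label of its terminal node. A nondeterministic decision tree for $T$ is a decision tree $\Gamma$ whose worker-node attributes lie in $At(T)$, such that $\bigcup_{\xi}\Delta(T\pi(\xi))=\Delta(T)$ (union over complete paths), and for every row $r\in\Delta(T)$ and every complete path $\xi$ with $r\in\Delta(T\pi(\xi))$, $\tau(\xi)$ belongs to the decision set of $r$. A decision tree is deterministic if exactly one edge leaves the root and the edges leaving each worker node have pairwise different labels; a deterministic decision tree for $T$ is a deterministic decision tree that is a nondeterministic decision tree for $T$. A complexity measure over $\mathcal{M}_k(F)$ is any map $\psi:F^*\to\mathbb{N}$, where $F^*$ is the set of finite words over $F$ including the empty word $\lambda$. For a tree, $\psi(\Gamma)=\max_\xi\psi(\varphi(\xi))$ over complete paths. For $T$ with columns labeled $f_1,\dots,f_n$: $\psi^i(T)=\psi(f_1\cdots f_n)$, $\psi^d(T)$ is the minimum complexity of a deterministic decision tree for $T$, $\psi^a(T)$ the minimum complexity of a nondeterministic decision tree for $T$. *)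

theory Defs
  imports Main "HOL-Library.Extended_Nat"
begin

datatype 'f dtable = DTable (attrs: "'f list") (rows: "nat list set") (dec: "nat list \<Rightarrow> nat set")

definition is_table :: "nat \<Rightarrow> 'f dtable \<Rightarrow> bool" where
  "is_table k T \<longleftrightarrow>
     k \<ge> 2 \<and> attrs T \<noteq> [] \<and>
     (\<forall>r\<in>rows T. length r = length (attrs T) \<and> (\<forall>i<length r. r ! i < k)) \<and>
     (\<forall>i<length (attrs T). \<forall>j<length (attrs T). attrs T ! i = attrs T ! j \<longrightarrow>
        (\<forall>r\<in>rows T. r ! i = r ! j)) \<and>
     (\<forall>r\<in>rows T. dec T r \<noteq> {} \<and> finite (dec T r))"

definition subrows :: "'f dtable \<Rightarrow> ('f \<times> nat) list \<Rightarrow> nat list set" where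
  "subrows T \<alpha> = {r \<in> rows T. \<forall>(f, \<delta>) \<in> set \<alpha>.
      \<exists>i<length (attrs T). attrs T ! i = f \<and> r ! i = \<delta>}"

text \<open>A decision tree is the (unlabelled) root together with the list of subtrees reached
  by the (unlabelled) edges leaving the root.\<close>
datatype 'f dtree = Leaf nat | Node 'f "(nat \<times> 'f dtree) list"

type_synonym 'f dec_tree = "'f dtree list"

inductive wf_sub :: "nat \<Rightarrow> 'f dtree \<Rightarrow> bool" for k where
  "wf_sub k (Leaf d)"
| "cs \<noteq> [] \<Longrightarrow> (\<And>\<delta> c. (\<delta>, c) \<in> set cs \<Longrightarrow> \<delta> < k \<and> wf_sub k c) \<Longrightarrow> wf_sub k (Node f cs)"

text \<open>Decision tree over M_k(F): at least two nodes (root has a child).\<close>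
definition wf_tree :: "nat \<Rightarrow> 'f dec_tree \<Rightarrow> bool" where
  "wf_tree k G \<longleftrightarrow> G \<noteq> [] \<and> (\<forall>t\<in>set G. wf_sub k t)"

inductive sub_path :: "'f dtree \<Rightarrow> ('f \<times> nat) list \<Rightarrow> nat \<Rightarrow> bool" where
  "sub_path (Leaf d) [] d"
| "(\<delta>, c) \<in> set cs \<Longrightarrow> sub_path c p d \<Longrightarrow> sub_path (Node f cs) ((f, \<delta>) # p) d"

text \<open>Complete paths xi of a tree, given as (pi(xi), tau(xi)).\<close>
definition cpath :: "'f dec_tree \<Rightarrow> ('f \<times> nat) list \<Rightarrow> nat \<Rightarrow> bool" where
  "cpath G p d \<longleftrightarrow> (\<exists>t\<in>set G. sub_path t p d)"

definition tree_attrs :: "'f dec_tree \<Rightarrow> 'f set" where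
  "tree_attrs G = (\<Union>t\<in>set G. set_dtree t)"

inductive det_sub :: "'f dtree \<Rightarrow> bool" where
  "det_sub (Leaf d)"
| "distinct (map fst cs) \<Longrightarrow> (\<And>\<delta> c. (\<delta>, c) \<in> set cs \<Longrightarrow> det_sub c) \<Longrightarrow> det_sub (Node f cs)"

definition deterministic :: "'f dec_tree \<Rightarrow> bool" where
  "deterministic G \<longleftrightarrow> length G = 1 \<and> (\<forall>t\<in>set G. det_sub t)"

definition nondet_tree_for :: "nat \<Rightarrow> 'f dtable \<Rightarrow> 'f dec_tree \<Rightarrow> bool" where
  "nondet_tree_for k T G \<longleftrightarrow>
     wf_tree k G \<and> tree_attrs G \<subseteq> set (attrs T) \<and>
     (\<Union>{subrows T p | p d. cpath G p d}) = rows T \<and>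
     (\<forall>r\<in>rows T. \<forall>p d. cpath G p d \<and> r \<in> subrows T p \<longrightarrow> d \<in> dec T r)"

definition det_tree_for :: "nat \<Rightarrow> 'f dtable \<Rightarrow> 'f dec_tree \<Rightarrow> bool" where
  "det_tree_for k T G \<longleftrightarrow> deterministic G \<and> nondet_tree_for k T G"

text \<open>A complexity measure is any psi :: 'f list \<Rightarrow> nat.\<close>
definition tree_cplx :: "('f list \<Rightarrow> nat) \<Rightarrow> 'f dec_tree \<Rightarrow> nat" where
  "tree_cplx \<psi> G = Max {\<psi> (map fst p) | p d. cpath G p d}"

definition psi_i :: "('f list \<Rightarrow> nat) \<Rightarrow> 'f dtable \<Rightarrow> nat" where
  "psi_i \<psi> T = \<psi> (attrs T)"

text \<open>Minima are taken in enat, so that a minimum over the empty set would be infinity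
  (no trivialization by the convention Inf {} = 0 on nat).\<close>
definition psi_d :: "nat \<Rightarrow> ('f list \<Rightarrow> nat) \<Rightarrow> 'f dtable \<Rightarrow> enat" where
  "psi_d k \<psi> T = (INF G \<in> {G. det_tree_for k T G}. enat (tree_cplx \<psi> G))"

definition psi_a :: "nat \<Rightarrow> ('f list \<Rightarrow> nat) \<Rightarrow> 'f dtable \<Rightarrow> enat" where
  "psi_a k \<psi> T = (INF G \<in> {G. nondet_tree_for k T G}. enat (tree_cplx \<psi> G))"

end

theory Submission
  imports Defs
begin

(* Every deterministic decision tree for T is also a nondeterministic one, so the minimum
   over the larger class is smaller: psi_a T <= psi_d T.  For psi_d T <= psi_i T, take the
   deterministic tree that queries all columns f_1 ... f_n in this order and, at the leaf
   reached by the answer tuple, outputs a decision of that tuple.  Every complete path has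
   attribute word f_1 ... f_n, so the tree has complexity psi(f_1 ... f_n).  Since columns
   with the same attribute are equal, the only row that can follow the path of an answer
   tuple is that tuple itself, so the tree is correct. *)

fun full_tree :: "nat \<Rightarrow> (nat list \<Rightarrow> nat) \<Rightarrow> 'f list \<Rightarrow> nat list \<Rightarrow> 'f dtree" where
  "full_tree k L [] acc = Leaf (L acc)"
| "full_tree k L (f # fs) acc =
     Node f (map (\<lambda>\<delta>. (\<delta>, full_tree k L fs (acc @ [\<delta>]))) [0..<k])"

lemma sub_path_Leaf_iff: "sub_path (Leaf x) p d \<longleftrightarrow> p = [] \<and> d = x"
  by (auto elim: sub_path.cases intro: sub_path.intros)

lemma sub_path_Node_iff:
  "sub_path (Node f cs) p d \<longleftrightarrow>
     (\<exists>\<delta> c p'. p = (f, \<delta>) # p' \<and> (\<delta>, c) \<in> set cs \<and> sub_path c p' d)"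
  by (rule iffI, erule sub_path.cases) (auto intro: sub_path.intros)

lemma sub_path_full_tree_iff:
  "sub_path (full_tree k L fs acc) p d \<longleftrightarrow>
     (\<exists>vs. length vs = length fs \<and> set vs \<subseteq> {..<k} \<and> p = zip fs vs \<and> d = L (acc @ vs))"
proof (induction fs arbitrary: acc p)
  case Nil
  then show ?case by (simp add: sub_path_Leaf_iff)
next
  case (Cons f fs)
  have "sub_path (full_tree k L (f # fs) acc) p d \<longleftrightarrow>
        (\<exists>\<delta> p'. \<delta> < k \<and> p = (f, \<delta>) # p' \<and> sub_path (full_tree k L fs (acc @ [\<delta>])) p' d)"
    by (auto simp: sub_path_Node_iff image_iff)
  also have "\<dots> \<longleftrightarrow> (\<exists>\<delta> vs. \<delta> < k \<and> length vs = length fs \<and> set vs \<subseteq> {..<k} \<and>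
                        p = zip (f # fs) (\<delta> # vs) \<and> d = L (acc @ \<delta> # vs))"
    by (auto simp: Cons.IH)
  also have "\<dots> \<longleftrightarrow> (\<exists>vs. length vs = length (f # fs) \<and> set vs \<subseteq> {..<k} \<and>
                        p = zip (f # fs) vs \<and> d = L (acc @ vs))"
    by (fastforce simp: length_Suc_conv)
  finally show ?case .
qed

lemma wf_sub_full_tree: "k > 0 \<Longrightarrow> wf_sub k (full_tree k L fs acc)"
  by (induction fs arbitrary: acc) (auto intro!: wf_sub.intros)

lemma det_sub_full_tree: "det_sub (full_tree k L fs acc)"
  by (induction fs arbitrary: acc) (auto intro!: det_sub.intros simp: comp_def)

lemma set_dtree_full_tree: "set_dtree (full_tree k L fs acc) \<subseteq> set fs"
  by (induction fs arbitrary: acc) auto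

lemma tree_cplx_full_tree:
  assumes "k > 0"
  shows "tree_cplx \<psi> [full_tree k L fs []] = \<psi> fs"
proof -
  let ?zeros = "replicate (length fs) 0"
  have "sub_path (full_tree k L fs []) (zip fs ?zeros) (L ?zeros)"
    using assms by (auto simp: sub_path_full_tree_iff intro!: exI[of _ ?zeros])
  moreover have "map fst p = fs" if "sub_path (full_tree k L fs []) p d" for p d
    using that by (auto simp: sub_path_full_tree_iff)
  ultimately have "{\<psi> (map fst p) | p d. cpath [full_tree k L fs []] p d} = {\<psi> fs}"
    unfolding cpath_def by fastforce
  then show ?thesis by (simp add: tree_cplx_def)
qed

lemma is_table_rowD:
  assumes "is_table k T" and "r \<in> rows T"
  shows "length r = length (attrs T) \<and> set r \<subseteq> {..<k} \<and> dec T r \<noteq> {}"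
proof -
  from assms have "length r = length (attrs T)" "\<forall>i<length r. r ! i < k" "dec T r \<noteq> {}"
    unfolding is_table_def by blast+
  then show ?thesis by (auto simp: in_set_conv_nth)
qed

lemma subrows_zip_attrs:
  assumes "is_table k T" and "length vs = length (attrs T)"
  shows "subrows T (zip (attrs T) vs) = rows T \<inter> {vs}"
proof (intro equalityI subsetI)
  fix r assume r: "r \<in> subrows T (zip (attrs T) vs)"
  then have "r \<in> rows T" by (simp add: subrows_def)
  moreover have "r = vs"
  proof (rule nth_equalityI)
    show "length r = length vs"
      using is_table_rowD[OF assms(1) \<open>r \<in> rows T\<close>] assms(2) by simp
    fix j assume "j < length r"
    then have j: "j < length (attrs T)" and "(attrs T ! j, vs ! j) \<in> set (zip (attrs T) vs)"
      using \<open>length r = length vs\<close> assms(2) by (auto simp: in_set_zip)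
    then obtain i where i: "i < length (attrs T)" "attrs T ! i = attrs T ! j" "r ! i = vs ! j"
      using r by (fastforce simp: subrows_def)
    \<comment> \<open>columns labelled with the same attribute are equal\<close>
    then have "r ! i = r ! j"
      using assms(1) j \<open>r \<in> rows T\<close> unfolding is_table_def by blast
    then show "r ! j = vs ! j" using i by simp
  qed
  ultimately show "r \<in> rows T \<inter> {vs}" by simp
next
  fix r assume "r \<in> rows T \<inter> {vs}"
  then show "r \<in> subrows T (zip (attrs T) vs)"
    using assms(2) by (auto simp: subrows_def in_set_zip)
qed

definition table_tree :: "nat \<Rightarrow> 'f dtable \<Rightarrow> 'f dec_tree" where
  "table_tree k T = [full_tree k (\<lambda>r. SOME d. d \<in> dec T r) (attrs T) []]"

lemma det_tree_for_table_tree: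
  assumes T: "is_table k T"
  shows "det_tree_for k T (table_tree k T)"
proof -
  let ?L = "\<lambda>r. SOME d. d \<in> dec T r" and ?n = "length (attrs T)"
  have k: "k > 0"
    using T by (simp add: is_table_def)
  note row = is_table_rowD[OF T]
  have cpath: "cpath (table_tree k T) p d \<longleftrightarrow>
      (\<exists>vs. length vs = ?n \<and> set vs \<subseteq> {..<k} \<and> p = zip (attrs T) vs \<and> d = ?L vs)" for p d
    by (simp add: table_tree_def cpath_def sub_path_full_tree_iff)
  have covers: "\<Union>{subrows T p | p d. cpath (table_tree k T) p d} = rows T"
  proof (intro equalityI subsetI)
    fix r assume "r \<in> rows T"
    then have "cpath (table_tree k T) (zip (attrs T) r) (?L r)"
      and "r \<in> subrows T (zip (attrs T) r)"
      using row subrows_zip_attrs[OF T] by (auto simp: cpath)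
    then show "r \<in> \<Union>{subrows T p | p d. cpath (table_tree k T) p d}" by blast
  qed (auto simp: subrows_def)
  have correct: "d \<in> dec T r"
    if r: "r \<in> rows T" and path: "cpath (table_tree k T) p d" and "r \<in> subrows T p"
    for r p d
  proof -
    obtain vs where "length vs = ?n" "p = zip (attrs T) vs" "d = ?L vs"
      using path by (auto simp: cpath)
    with \<open>r \<in> subrows T p\<close> have "r = vs" "d = ?L r" using subrows_zip_attrs[OF T] by auto
    then show ?thesis using row[OF r] by (simp add: some_in_eq)
  qed
  show ?thesis
    unfolding det_tree_for_def deterministic_def nondet_tree_for_def
  proof (intro conjI)
    show "wf_tree k (table_tree k T)"
      using k by (simp add: wf_tree_def table_tree_def wf_sub_full_tree)
    show "tree_attrs (table_tree k T) \<subseteq> set (attrs T)"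
      by (simp add: tree_attrs_def table_tree_def set_dtree_full_tree)
  qed (use covers correct in \<open>auto simp: table_tree_def det_sub_full_tree\<close>)
qed

lemma psi_a_le_psi_d: "psi_a k \<psi> T \<le> psi_d k \<psi> T"
  unfolding psi_a_def psi_d_def det_tree_for_def
  by (rule INF_superset_mono) auto

lemma psi_d_le_psi_i:
  assumes "is_table k T"
  shows "psi_d k \<psi> T \<le> enat (psi_i \<psi> T)"
proof -
  have "k > 0" using assms by (simp add: is_table_def)
  then have "tree_cplx \<psi> (table_tree k T) = psi_i \<psi> T"
    by (simp add: table_tree_def tree_cplx_full_tree psi_i_def)
  with det_tree_for_table_tree[OF assms] show ?thesis
    unfolding psi_d_def by (metis INF_lower mem_Collect_eq)
qed

theorem lemma1:
  fixes k :: nat and T :: "'f dtable" and \<psi> :: "'f list \<Rightarrow> nat"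
  assumes "is_table k T"
  shows "psi_a k \<psi> T \<le> psi_d k \<psi> T \<and> psi_d k \<psi> T \<le> enat (psi_i \<psi> T)"
  using psi_a_le_psi_d psi_d_le_psi_i[OF assms] by blast

end
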